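(* Let $i\geq1$, let $T$ be an SSRT of partition shape $\lambda$ such that $\lambda$ has an addable node in column $i+1$, and let $f_{i+1}(T)=T_{(r,i)}$. Define $T'$ by $T'_{(p,q)}=T_{(p,q)}$ if $q\neq i$; $T'_{(p,i)}=T_{(p,i)}$ if $p<r$; and $T'_{(p,i)}=T_{(p+1,i)}$ if $p\geq r$ (for those $p$ with $(p+1,i)\in\lambda$). Then $T'$ is an SSRT.
   Context: SSRTs (French convention: rows numbered bottom to top, $(p,q)$ = row $p$, column $q$): fillings of a partition shape with positive integers weakly decreasing along rows left to right and strictly decreasing along columns bottom to top. With $T_{(p,q)}=0$ for $(p,q)\notin\lambda$ and $T_{(0,q)}=\infty$, $f_{i+1}(T)$ is the entry $T_{(r,i)}$ where $r$ is the largest integer with $(r,i)\in\lambda$ and $T_{(r,i)}<T_{(r-1,i+1)}$; this is the first entry that moves horizontally in the backward jeu de taquin slide started at the addable node in column $i+1$ (at each step the empty box at $(p,q)$ is filled from whichever of $(p-1,q)$, $(p,q-1)$ holds the smaller entry, ties going to $(p-1,q)$). Thus $T'$ is obtained by removing $T_{(r,i)}$ and sliding the entries above it in column $i$ down one row. *)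

theory Defs
  imports Main "HOL-Library.Extended_Nat"
begin

text \<open>Cells are pairs (p,q) = (row p, column q), rows numbered bottom to top
  (French convention), rows and columns numbered from 1.\<close>

definition partition_shape :: "(nat \<times> nat) set \<Rightarrow> bool" where
  "partition_shape lam \<longleftrightarrow> finite lam \<and>
     (\<forall>p q. (p, q) \<in> lam \<longrightarrow> p \<ge> 1 \<and> q \<ge> 1) \<and>
     (\<forall>p q p' q'. (p, q) \<in> lam \<longrightarrow> 1 \<le> p' \<longrightarrow> p' \<le> p \<longrightarrow> 1 \<le> q' \<longrightarrow> q' \<le> q
        \<longrightarrow> (p', q') \<in> lam)"

definition addable :: "(nat \<times> nat) set \<Rightarrow> nat \<times> nat \<Rightarrow> bool" where
  "addable lam c \<longleftrightarrow> c \<notin> lam \<and> fst c \<ge> 1 \<and> snd c \<ge> 1 \<and> partition_shape (insert c lam)"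

definition is_SSRT :: "(nat \<times> nat) set \<Rightarrow> (nat \<times> nat \<Rightarrow> nat) \<Rightarrow> bool" where
  "is_SSRT lam T \<longleftrightarrow> partition_shape lam \<and>
     (\<forall>c \<in> lam. T c > 0) \<and>
     (\<forall>p q. (p, q) \<in> lam \<longrightarrow> (p, q + 1) \<in> lam \<longrightarrow> T (p, q) \<ge> T (p, q + 1)) \<and>
     (\<forall>p q. (p, q) \<in> lam \<longrightarrow> (p + 1, q) \<in> lam \<longrightarrow> T (p, q) > T (p + 1, q))"

definition ext_entry :: "(nat \<times> nat) set \<Rightarrow> (nat \<times> nat \<Rightarrow> nat) \<Rightarrow> nat \<times> nat \<Rightarrow> enat" where
  "ext_entry lam T c = (if fst c = 0 then \<infinity> else if c \<in> lam then enat (T c) else 0)"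

text \<open>The row r with f_{i+1}(T) = T_(r,i): the largest r with (r,i) in lam and
  T_(r,i) < T_(r-1,i+1).\<close>
definition f_row :: "(nat \<times> nat) set \<Rightarrow> (nat \<times> nat \<Rightarrow> nat) \<Rightarrow> nat \<Rightarrow> nat" where
  "f_row lam T i = (GREATEST r. (r, i) \<in> lam \<and>
       ext_entry lam T (r, i) < ext_entry lam T (r - 1, i + 1))"

definition f_op :: "(nat \<times> nat) set \<Rightarrow> (nat \<times> nat \<Rightarrow> nat) \<Rightarrow> nat \<Rightarrow> nat" where
  "f_op lam T i = T (f_row lam T i, i)"

text \<open>The tableau T' (and its shape): remove T_(r,i), slide the entries above it in
  column i down one row.\<close>
definition remove_shape :: "(nat \<times> nat) set \<Rightarrow> nat \<Rightarrow> (nat \<times> nat) set" where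
  "remove_shape lam i = {(p, q) \<in> lam. q \<noteq> i \<or> (p + 1, i) \<in> lam}"

definition remove_tab :: "(nat \<times> nat \<Rightarrow> nat) \<Rightarrow> nat \<Rightarrow> nat \<Rightarrow> nat \<times> nat \<Rightarrow> nat" where
  "remove_tab T i r = (\<lambda>(p, q). if q \<noteq> i then T (p, q)
                                else if p < r then T (p, i) else T (p + 1, i))"

end

theory Submission
  imports Defs
begin

text \<open>Because column i is strictly longer than column i+1 (there is an addable node in column
  i+1), the shape stays a partition after deleting the top cell of column i. Column i stays
  strictly decreasing since the shift preserves the order of its entries. Row conditions
  between columns i-1 and i only get easier, because entries of column i decrease when
  shifted down. The one real constraint is T'(p,i) = T(p+1,i) \<ge> T(p,i+1) for
  p \<ge> r, and this is exactly the maximality of r in the definition of f_(i+1).\<close>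

definition column_longer :: "(nat \<times> nat) set \<Rightarrow> nat \<Rightarrow> bool" where
  "column_longer lam i \<longleftrightarrow> (\<forall>p. (p, i + 1) \<in> lam \<longrightarrow> (p + 1, i) \<in> lam)"

lemma partition_shape_down_closed:
  assumes "partition_shape lam" "(p, q) \<in> lam" "1 \<le> p'" "p' \<le> p" "1 \<le> q'" "q' \<le> q"
  shows "(p', q') \<in> lam"
  using assms unfolding partition_shape_def by blast

lemma partition_shape_pos:
  assumes "partition_shape lam" "(p, q) \<in> lam"
  shows "1 \<le> p" "1 \<le> q"
  using assms unfolding partition_shape_def by blast+

lemma addable_column_longer:
  assumes "i \<ge> 1" "partition_shape lam" "addable lam (a, i + 1)"
  shows "column_longer lam i"
  unfolding column_longer_def
proof (intro allI impI)
  fix p assume p: "(p, i + 1) \<in> lam"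
  from assms(3) have a: "1 \<le> a" "(a, i + 1) \<notin> lam"
    and shape: "partition_shape (insert (a, i + 1) lam)"
    unfolding addable_def by simp_all
  have "p + 1 \<le> a"
    using partition_shape_down_closed[OF assms(2) p, of a "i + 1"] a by fastforce
  then have "(p + 1, i) \<in> insert (a, i + 1) lam"
    using partition_shape_down_closed[OF shape, of a "i + 1" "p + 1" i] assms(1) by simp
  then show "(p + 1, i) \<in> lam" by auto
qed

lemma partition_shape_remove_shape:
  assumes shape: "partition_shape lam" and longer: "column_longer lam i"
  shows "partition_shape (remove_shape lam i)"
  unfolding partition_shape_def
proof (intro conjI allI impI)
  have "remove_shape lam i \<subseteq> lam" by (auto simp: remove_shape_def)
  then show "finite (remove_shape lam i)"
    using shape finite_subset unfolding partition_shape_def by blast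
next
  fix p q assume "(p, q) \<in> remove_shape lam i"
  then show "1 \<le> p" "1 \<le> q"
    using partition_shape_pos[OF shape] by (auto simp: remove_shape_def)
next
  fix p q p' q'
  assume pq: "(p, q) \<in> remove_shape lam i" and p': "1 \<le> p'" "p' \<le> p"
    and q': "1 \<le> q'" "q' \<le> q"
  then have pq_lam: "(p, q) \<in> lam" and above: "q = i \<Longrightarrow> (p + 1, i) \<in> lam"
    by (auto simp: remove_shape_def)
  have "(p + 1, i) \<in> lam" if "q' = i"
  proof (cases "q = i")
    case False
    with that q' have "(p, i + 1) \<in> lam"
      using partition_shape_down_closed[OF shape pq_lam, of p "i + 1"] p' by simp
    then show ?thesis using longer unfolding column_longer_def by blast
  qed (use above in simp)
  then have "q' = i \<Longrightarrow> (p' + 1, i) \<in> lam"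
    using partition_shape_down_closed[OF shape, of "p + 1" i "p' + 1" i] p' q' by simp
  moreover have "(p', q') \<in> lam"
    using partition_shape_down_closed[OF shape pq_lam] p' q' .
  ultimately show "(p', q') \<in> remove_shape lam i"
    by (auto simp: remove_shape_def)
qed

lemma le_f_row:
  assumes "finite lam" "(s, i) \<in> lam"
    and "ext_entry lam T (s, i) < ext_entry lam T (s - 1, i + 1)"
  shows "s \<le> f_row lam T i"
proof -
  obtain b where "\<forall>x \<in> fst ` lam. x \<le> b"
    using finite_nat_set_iff_bounded_le assms(1) by blast
  then have "\<forall>y. (y, i) \<in> lam \<longrightarrow> y \<le> b" by force
  then show ?thesis
    unfolding f_row_def using assms(2,3) by (intro Greatest_le_nat[where b = b]) auto
qed

lemma entry_le_above_f_row:
  assumes "finite lam" "f_row lam T i \<le> p" "(p, i + 1) \<in> lam" "(p + 1, i) \<in> lam"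
  shows "T (p, i + 1) \<le> T (p + 1, i)"
proof (rule ccontr)
  assume "\<not> ?thesis"
  then have "p + 1 \<le> f_row lam T i"
    using le_f_row[OF assms(1,4), of T] assms(3,4) by (auto simp: ext_entry_def)
  then show False using assms(2) by simp
qed

lemma remove_tab_rows:
  assumes SSRT: "is_SSRT lam T"
    and sliding: "\<And>p. r \<le> p \<Longrightarrow> (p, i + 1) \<in> lam \<Longrightarrow> (p + 1, i) \<in> lam
                      \<Longrightarrow> T (p, i + 1) \<le> T (p + 1, i)"
    and pq: "(p, q) \<in> remove_shape lam i" "(p, q + 1) \<in> remove_shape lam i"
  shows "remove_tab T i r (p, q + 1) \<le> remove_tab T i r (p, q)"
proof -
  have shape: "partition_shape lam"
    and rows: "\<And>p q. (p, q) \<in> lam \<Longrightarrow> (p, q + 1) \<in> lam \<Longrightarrow> T (p, q + 1) \<le> T (p, q)"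
    and cols: "\<And>p q. (p, q) \<in> lam \<Longrightarrow> (p + 1, q) \<in> lam \<Longrightarrow> T (p + 1, q) < T (p, q)"
    using SSRT unfolding is_SSRT_def by blast+
  consider "q \<noteq> i" "q + 1 \<noteq> i" | "p < r" | "q = i" "r \<le> p" | "q + 1 = i" "r \<le> p"
    by linarith
  then show ?thesis
  proof cases
    case 3
    then show ?thesis using pq sliding by (auto simp: remove_shape_def remove_tab_def)
  next
    case 4
    from pq 4 have pq_lam: "(p, q) \<in> lam" and above: "(p + 1, i) \<in> lam"
      by (auto simp: remove_shape_def)
    have "(p, i) \<in> lam"
      using partition_shape_down_closed[OF shape above, of p i]
        partition_shape_pos[OF shape pq_lam] 4 by simp
    with pq_lam above 4 have "T (p + 1, i) < T (p, q)"
      using rows[of p q] cols[of p i] by fastforce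
    with 4 show ?thesis by (simp add: remove_tab_def)
  qed (use pq rows in \<open>auto simp: remove_shape_def remove_tab_def\<close>)
qed

lemma remove_tab_columns:
  assumes SSRT: "is_SSRT lam T"
    and pq: "(p, q) \<in> remove_shape lam i" "(p + 1, q) \<in> remove_shape lam i"
  shows "remove_tab T i r (p + 1, q) < remove_tab T i r (p, q)"
proof -
  have cols: "\<And>p q. (p, q) \<in> lam \<Longrightarrow> (p + 1, q) \<in> lam \<Longrightarrow> T (p + 1, q) < T (p, q)"
    using SSRT unfolding is_SSRT_def by blast
  show ?thesis
  proof (cases "q = i")
    case True
    with pq have "(p, i) \<in> lam" "(p + 1, i) \<in> lam" "(p + 2, i) \<in> lam"
      by (auto simp: remove_shape_def)
    then have "T (p + 1, i) < T (p, i)" "T (p + 2, i) < T (p + 1, i)"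
      using cols[of p i] cols[of "p + 1" i] by simp_all
    with True show ?thesis by (auto simp: remove_tab_def)
  qed (use pq cols in \<open>auto simp: remove_shape_def remove_tab_def\<close>)
qed

lemma is_SSRT_remove_tab:
  assumes SSRT: "is_SSRT lam T" and longer: "column_longer lam i"
    and sliding: "\<And>p. r \<le> p \<Longrightarrow> (p, i + 1) \<in> lam \<Longrightarrow> (p + 1, i) \<in> lam
                      \<Longrightarrow> T (p, i + 1) \<le> T (p + 1, i)"
  shows "is_SSRT (remove_shape lam i) (remove_tab T i r)"
  unfolding is_SSRT_def
proof (intro conjI allI impI ballI)
  show "partition_shape (remove_shape lam i)"
    using partition_shape_remove_shape SSRT longer unfolding is_SSRT_def by blast
next
  fix c assume "c \<in> remove_shape lam i"
  then show "0 < remove_tab T i r c"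
    using SSRT unfolding is_SSRT_def
    by (cases c) (auto simp: remove_shape_def remove_tab_def)
qed (use remove_tab_rows[OF SSRT sliding] remove_tab_columns[OF SSRT] in blast)+

theorem lemma6p1:
  fixes lam :: "(nat \<times> nat) set" and T :: "nat \<times> nat \<Rightarrow> nat" and i r :: nat
  assumes "i \<ge> 1"
    and "is_SSRT lam T"
    and "\<exists>p. addable lam (p, i + 1)"
    and "r = f_row lam T i"
  shows "is_SSRT (remove_shape lam i) (remove_tab T i r)"
proof (rule is_SSRT_remove_tab)
  have shape: "partition_shape lam" using assms(2) unfolding is_SSRT_def by blast
  then show "column_longer lam i"
    using addable_column_longer assms(1,3) by blast
  show "T (p, i + 1) \<le> T (p + 1, i)"
    if "r \<le> p" "(p, i + 1) \<in> lam" "(p + 1, i) \<in> lam" for p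
    using entry_le_above_f_row[of lam T i p] shape that assms(4)
    unfolding partition_shape_def by blast
qed (fact assms(2))

end
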